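(* (i) For $k\ge 4$ (and any $N\ge 2$), $$Q_2^{(k)}(x)=\frac{(3k-1)(1+x^2)-2(3k-5)x}{3k-1}.$$ (ii) For $k\ge 5$ (and any $N\ge 2$), $$Q_3^{(k)}(x) = -\frac{(x-1)\bigl(kx^2-2(k-4)x+k\bigr)}{k}.$$
   Context: Let $k\ge 2$, $N\ge 2$, $H[c,c'] = \#\{(d_1,\ldots,d_k)\in\{0,\ldots,N-1\}^k : \lfloor (d_1+\cdots+d_k+c)/N\rfloor = c'\}$ for $c,c'\in\{0,\ldots,k-1\}$ and $T=N^{-k}H$ (Holte matrix). For $j\in\{0,\ldots,k-1\}$ let $v_j$ be the right eigenvector of $T$ ($Tv_j=N^{-j}v_j$) normalized by $v_j[0]=1$. The quotient polynomial $Q_j^{(k)}$ is defined by $\sum_{i=0}^{k-1}\binom{k-1}{i}v_j[i]x^i=(1+x)^{k-1-j}Q_j^{(k)}(x)$ (this polynomial division is exact, $\deg Q_j^{(k)}=j$; $v_j$ and $Q^{(k)}_j$ do not depend on $N$). *)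

theory Defs
  imports "HOL-Computational_Algebra.Polynomial" "HOL-Library.FuncSet"
begin

definition holte_H :: "nat \<Rightarrow> nat \<Rightarrow> nat \<Rightarrow> nat \<Rightarrow> nat" where
  "holte_H k N c c' =
     card {d \<in> PiE {..<k} (\<lambda>_. {..<N}). ((\<Sum>i<k. d i) + c) div N = c'}"

definition holte_T :: "nat \<Rightarrow> nat \<Rightarrow> nat \<Rightarrow> nat \<Rightarrow> real" where
  "holte_T k N c c' = real (holte_H k N c c') / real N ^ k"

text \<open>v is a right eigenvector of T for eigenvalue N^(-j), normalized by v[0] = 1
  (vectors of length k are functions nat => real vanishing outside {0..k-1}).\<close>
definition is_holte_eigvec :: "nat \<Rightarrow> nat \<Rightarrow> nat \<Rightarrow> (nat \<Rightarrow> real) \<Rightarrow> bool" where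
  "is_holte_eigvec k N j v \<longleftrightarrow>
     (\<forall>c<k. (\<Sum>c'<k. holte_T k N c c' * v c') = v c / real N ^ j)
     \<and> v 0 = 1 \<and> (\<forall>i\<ge>k. v i = 0)"

definition holte_v :: "nat \<Rightarrow> nat \<Rightarrow> nat \<Rightarrow> nat \<Rightarrow> real" where
  "holte_v k N j = (THE v. is_holte_eigvec k N j v)"

text \<open>Quotient polynomial: sum_i binom(k-1,i) v_j[i] x^i = (1+x)^(k-1-j) Q_j(x).\<close>
definition holte_Q :: "nat \<Rightarrow> nat \<Rightarrow> nat \<Rightarrow> real poly" where
  "holte_Q k N j =
     (\<Sum>i<k. monom (real (k - 1 choose i) * holte_v k N j i) i) div [:1, 1:] ^ (k - 1 - j)"

end

(*
  The eigen-equation of T is read through the operator (S f)(c) = sum_{t<N} f (c + t): for c < k,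
  (T v)(c) = N^-k (S^k (v o div N))(c), because k digits never carry more than k - 1.
  For a polynomial q of degree m < k, S^k (q o div N) is again a polynomial of degree m, with leading
  coefficient N^(k-m) lead q: through y div N = (y - y mod N) / N, q o div N is a polynomial in y with
  N-periodic coefficients, and each application of S makes the highest still periodic coefficient
  constant, so m + 1 <= k applications leave a polynomial.  So T is triangular on polynomials of degree < k with diagonal entries N^-m, and v_j
  consists of the values of the unique eigenpolynomial of degree j.  In y = x - (k-1)/2 the
  eigenpolynomials for j = 2, 3 are y^2 - (k+1)/12 and y^3 - (k+1) y / 4, as the first three
  moments of c plus k uniform digits show.  Finally sum_i C(n,i) C(i,r) x^i = C(n,r) x^r (1+x)^(n-r),
  so expanding an eigenpolynomial in the basis C(i,r) exhibits the factor (1+x)^(n-j) and gives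
  Q_j directly.  This proves (i) already for k >= 3 and (ii) for k >= 4.
*)

theory Submission
  imports Defs
begin

section \<open>Sums over digit tuples\<close>

definition digit_tuples :: "nat \<Rightarrow> nat \<Rightarrow> (nat \<Rightarrow> nat) set" where
  "digit_tuples k N = PiE {..<k} (\<lambda>_. {..<N})"

(* shift_sum k N f = S^k f, see shift_sum_Suc' *)
definition shift_sum :: "nat \<Rightarrow> nat \<Rightarrow> (nat \<Rightarrow> real) \<Rightarrow> nat \<Rightarrow> real" where
  "shift_sum k N f c = (\<Sum>d\<in>digit_tuples k N. f (c + (\<Sum>i<k. d i)))"

lemma finite_digit_tuples [simp]: "finite (digit_tuples k N)"
  unfolding digit_tuples_def by (auto intro: finite_PiE)

lemma card_digit_tuples: "card (digit_tuples k N) = N ^ k"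
  unfolding digit_tuples_def by (simp add: card_PiE)

lemma shift_sum_0 [simp]: "shift_sum 0 N f c = f c"
  unfolding shift_sum_def digit_tuples_def by simp

lemma shift_sum_Suc: "shift_sum (Suc k) N f c = (\<Sum>t<N. shift_sum k N f (c + t))"
proof -
  let ?ext = "\<lambda>(t, d). d(k := t)"
  have tuples: "digit_tuples (Suc k) N = ?ext ` ({..<N} \<times> digit_tuples k N)"
    unfolding digit_tuples_def lessThan_Suc by (simp add: PiE_insert_eq)
  have inj: "inj_on ?ext ({..<N} \<times> digit_tuples k N)"
    unfolding digit_tuples_def using inj_combinator[of k "{..<k}" "\<lambda>_. {..<N}"] by simp
  have upd: "(\<Sum>i<k. (d(k := t)) i) = (\<Sum>i<k. d i)" for d :: "nat \<Rightarrow> nat" and t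
    by (intro sum.cong) auto
  have "shift_sum (Suc k) N f c = (\<Sum>(t, d)\<in>{..<N} \<times> digit_tuples k N. f (c + t + (\<Sum>i<k. d i)))"
    unfolding shift_sum_def tuples sum.reindex[OF inj] by (intro sum.cong) (auto simp: upd ac_simps)
  then show ?thesis
    unfolding shift_sum_def by (simp add: sum.cartesian_product)
qed

lemma shift_sum_Suc': "shift_sum (Suc k) N f c = shift_sum k N (\<lambda>z. \<Sum>t<N. f (z + t)) c"
  unfolding shift_sum_Suc unfolding shift_sum_def
  by (subst sum.swap) (simp add: ac_simps)

lemma shift_sum_add: "shift_sum k N (\<lambda>y. f y + g y) c = shift_sum k N f c + shift_sum k N g c"
  unfolding shift_sum_def by (simp add: sum.distrib)

lemma shift_sum_diff: "shift_sum k N (\<lambda>y. f y - g y) c = shift_sum k N f c - shift_sum k N g c"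
  unfolding shift_sum_def by (simp add: sum_subtractf)

lemma shift_sum_cmult: "shift_sum k N (\<lambda>y. a * f y) c = a * shift_sum k N f c"
  unfolding shift_sum_def by (simp add: sum_distrib_left)

lemma shift_sum_divide: "shift_sum k N (\<lambda>y. f y / a) c = shift_sum k N f c / a"
  unfolding shift_sum_def by (simp add: sum_divide_distrib)

lemma shift_sum_sum:
  "shift_sum k N (\<lambda>y. \<Sum>e\<in>A. f e y) c = (\<Sum>e\<in>A. shift_sum k N (f e) c)"
  unfolding shift_sum_def by (rule sum.swap)

lemma shift_sum_const: "shift_sum k N (\<lambda>y. a) c = real N ^ k * a"
  unfolding shift_sum_def by (simp add: card_digit_tuples)

lemma sum_mod_shift:
  fixes h :: "nat \<Rightarrow> 'a::comm_monoid_add"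
  assumes "N > 0"
  shows "(\<Sum>t<N. h ((y + t) mod N)) = (\<Sum>u<N. h u)"
proof -
  have eq: "a = b" if "a \<le> b" "b < N" "(y + a) mod N = (y + b) mod N" for a b
    using that mod_eq_dvd_iff_nat[of "y + a" "y + b" N] nat_dvd_not_less[of "b - a" N]
    by (cases "a < b") auto
  have "inj_on (\<lambda>t. (y + t) mod N) {..<N}"
    by (rule inj_onI) (metis eq lessThan_iff nat_le_linear)
  moreover have "(\<lambda>t. (y + t) mod N) ` {..<N} \<subseteq> {..<N}"
    using assms by auto
  ultimately have "bij_betw (\<lambda>t. (y + t) mod N) {..<N} {..<N}"
    by (simp add: bij_betw_def endo_inj_surj)
  then show ?thesis by (rule sum.reindex_bij_betw)
qed

lemma shift_sum_periodic:
  assumes "N > 0"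
  shows "shift_sum (Suc k) N (\<lambda>y. h (y mod N)) c = real N ^ k * (\<Sum>u<N. h u)"
  unfolding shift_sum_Suc' sum_mod_shift[OF assms] by (rule shift_sum_const)

section \<open>Polynomiality of iterated shift sums\<close>

lemma coeff_pcompose_linear_top:
  fixes p :: "real poly"
  assumes "degree p \<le> b" "u \<noteq> 0"
  shows "coeff (pcompose p [:s, u:]) b = coeff p b * u ^ b"
proof (cases "degree p = b")
  case True
  then show ?thesis
    using lead_coeff_comp[of "[:s, u:]" p] assms(2) by (simp add: degree_pcompose)
next
  case False
  then show ?thesis
    using assms by (simp add: degree_pcompose coeff_eq_0)
qed

definition poly_fun :: "nat \<Rightarrow> real \<Rightarrow> (nat \<Rightarrow> real) \<Rightarrow> bool" where
  "poly_fun b L F \<longleftrightarrow> (\<exists>p. degree p \<le> b \<and> coeff p b = L \<and> (\<forall>c. F c = poly p (real c)))"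

lemma poly_fun_cmult: "poly_fun b L F \<Longrightarrow> poly_fun b (a * L) (\<lambda>c. a * F c)"
  unfolding poly_fun_def by (metis coeff_smult degree_smult_le order_trans poly_smult)

lemma poly_fun_sum:
  assumes "finite A" "\<And>e. e \<in> A \<Longrightarrow> poly_fun b (L e) (F e)"
  shows "poly_fun b (\<Sum>e\<in>A. L e) (\<lambda>c. \<Sum>e\<in>A. F e c)"
  using assms
proof (induction A rule: finite_induct)
  case empty
  show ?case unfolding poly_fun_def by (intro exI[of _ 0]) simp
next
  case (insert e A)
  obtain p where "degree p \<le> b" "coeff p b = L e" "\<forall>c. F e c = poly p (real c)"
    using insert.prems unfolding poly_fun_def by blast
  moreover obtain q where "degree q \<le> b" "coeff q b = (\<Sum>e\<in>A. L e)"
      "\<forall>c. (\<Sum>e\<in>A. F e c) = poly q (real c)"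
    using insert unfolding poly_fun_def by blast
  ultimately show ?case
    unfolding poly_fun_def using insert.hyps
    by (intro exI[of _ "p + q"]) (simp add: degree_add_le)
qed

lemma poly_fun_higher_degree: "poly_fun b L F \<Longrightarrow> b < b' \<Longrightarrow> poly_fun b' 0 F"
  unfolding poly_fun_def by (metis coeff_eq_0 le_less_trans less_imp_le)

lemma poly_fun_shift:
  assumes "poly_fun b L F"
  shows "poly_fun b L (\<lambda>c. F (c + t))"
proof -
  obtain p where p: "degree p \<le> b" "coeff p b = L" "\<forall>c. F c = poly p (real c)"
    using assms unfolding poly_fun_def by blast
  show ?thesis
    unfolding poly_fun_def
  proof (intro exI conjI allI)
    show "degree (pcompose p [:real t, 1:]) \<le> b"
      using p(1) by (simp add: degree_pcompose)
    show "coeff (pcompose p [:real t, 1:]) b = L"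
      using p(1,2) by (simp add: coeff_pcompose_linear_top)
    show "F (c + t) = poly (pcompose p [:real t, 1:]) (real c)" for c
      using p(3) by (simp add: poly_pcompose add.commute)
  qed
qed

lemma poly_fun_shift_sum_power: "poly_fun b (real N ^ k) (shift_sum k N (\<lambda>y. real y ^ b))"
proof (induction k)
  case 0
  show ?case
    unfolding poly_fun_def by (intro exI[of _ "monom 1 b"]) (simp add: degree_monom_le poly_monom)
next
  case (Suc k)
  then have "poly_fun b (\<Sum>t<N. real N ^ k) (\<lambda>c. \<Sum>t<N. shift_sum k N (\<lambda>y. real y ^ b) (c + t))"
    by (intro poly_fun_sum poly_fun_shift) auto
  then show ?case
    by (simp add: shift_sum_Suc[abs_def])
qed

lemma sum_shift_power_periodic:
  fixes h :: "nat \<Rightarrow> real"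
  shows "(\<Sum>t<N. real (z + t) ^ b * h ((z + t) mod N)) =
    (\<Sum>e\<le>b. real (b choose e) * (real z ^ e * (\<Sum>t<N. real t ^ (b - e) * h ((z mod N + t) mod N))))"
proof -
  have "(\<Sum>t<N. real (z + t) ^ b * h ((z + t) mod N)) =
    (\<Sum>t<N. \<Sum>e\<le>b. real (b choose e) * (real z ^ e * (real t ^ (b - e) * h ((z mod N + t) mod N))))"
  proof (intro sum.cong refl)
    fix t
    have "real (z + t) ^ b = (\<Sum>e\<le>b. real (b choose e) * real z ^ e * real t ^ (b - e))"
      by (simp add: binomial_ring)
    moreover have "(z + t) mod N = (z mod N + t) mod N"
      by (simp add: mod_add_left_eq)
    ultimately show "real (z + t) ^ b * h ((z + t) mod N) =
        (\<Sum>e\<le>b. real (b choose e) * (real z ^ e * (real t ^ (b - e) * h ((z mod N + t) mod N))))"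
      by (simp add: sum_distrib_left ac_simps)
  qed
  then show ?thesis
    by (subst (asm) sum.swap) (simp add: sum_distrib_left)
qed

lemma poly_fun_shift_sum_power_periodic:
  assumes "N > 0" "b < k"
  shows "poly_fun b (real N ^ (k - 1) * (\<Sum>u<N. h u))
           (shift_sum k N (\<lambda>y. real y ^ b * h (y mod N)))"
  using assms(2)
proof (induction b arbitrary: k h rule: less_induct)
  case (less b)
  then obtain k' where k: "k = Suc k'" and "b \<le> k'" by (cases k) auto
  define H where "H e r = (\<Sum>t<N. real t ^ (b - e) * h ((r + t) mod N))" for e r
  have terms: "poly_fun b (real (b choose e) * (if e = b then real N ^ k' * (\<Sum>u<N. h u) else 0))
      (\<lambda>c. real (b choose e) * shift_sum k' N (\<lambda>z. real z ^ e * H e (z mod N)) c)"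
    if "e \<le> b" for e
  proof (intro poly_fun_cmult)
    show "poly_fun b (if e = b then real N ^ k' * (\<Sum>u<N. h u) else 0)
        (shift_sum k' N (\<lambda>z. real z ^ e * H e (z mod N)))"
    proof (cases "e = b")
      case True
      then have "H e r = (\<Sum>u<N. h u)" for r
        unfolding H_def using sum_mod_shift[OF assms(1), of h r] by simp
      then show ?thesis
        using True poly_fun_cmult[OF poly_fun_shift_sum_power[of b N k'], of "\<Sum>u<N. h u"]
        by (simp add: shift_sum_cmult[symmetric] mult.commute)
    next
      case False
      with \<open>e \<le> b\<close> \<open>b \<le> k'\<close> have "e < b" "e < k'" by auto
      then show ?thesis
        using False less.IH[of e k' "H e"] poly_fun_higher_degree by auto
    qed
  qed
  have "poly_fun b (\<Sum>e\<le>b. real (b choose e) * (if e = b then real N ^ k' * (\<Sum>u<N. h u) else 0))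
      (\<lambda>c. \<Sum>e\<le>b. real (b choose e) * shift_sum k' N (\<lambda>z. real z ^ e * H e (z mod N)) c)"
    by (rule poly_fun_sum) (simp_all add: terms)
  then show ?case
    unfolding k shift_sum_Suc' sum_shift_power_periodic H_def[symmetric] shift_sum_sum shift_sum_cmult
    by (simp add: if_distrib[of "\<lambda>x. _ * x"] cong: if_cong)
qed

lemma poly_fun_shift_sum_poly_div:
  assumes "N > 0" "degree q < k"
  shows "poly_fun (degree q) (real N ^ k / real N ^ degree q * lead_coeff q)
           (shift_sum k N (\<lambda>y. poly q (real (y div N))))"
proof -
  define m where "m = degree q"
  define h where "h a r = coeff (pcompose q [:- real r / real N, 1 / real N:]) a" for a r
  have expand: "poly q (real (y div N)) = (\<Sum>a\<le>m. real y ^ a * h a (y mod N))" for y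
  proof -
    let ?L = "[:- real (y mod N) / real N, 1 / real N:]"
    have "real (y div N) = poly ?L (real y)"
      by (simp add: field_char_0_class.of_nat_div diff_divide_distrib)
    then have "poly q (real (y div N)) = poly (pcompose q ?L) (real y)"
      by (simp add: poly_pcompose)
    also have "\<dots> = (\<Sum>a\<le>m. coeff (pcompose q ?L) a * real y ^ a)"
      using assms(1) by (simp add: poly_altdef degree_pcompose m_def)
    finally show ?thesis
      by (simp add: h_def mult.commute)
  qed
  have "poly_fun m (if a = m then real N ^ k / real N ^ m * lead_coeff q else 0)
      (shift_sum k N (\<lambda>y. real y ^ a * h a (y mod N)))" if "a \<le> m" for a
  proof (cases "a = m")
    case True
    then have "h a r = lead_coeff q / real N ^ m" for r
      using assms(1) by (simp add: h_def m_def coeff_pcompose_linear_top power_one_over)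
    moreover obtain k' where "k = Suc k'"
      using assms(2) by (cases k) auto
    ultimately show ?thesis
      using True assms that poly_fun_shift_sum_power_periodic[of N a k "h a"]
      by (simp add: m_def ac_simps)
  next
    case False
    then show ?thesis
      using that assms poly_fun_shift_sum_power_periodic[of N a k "h a"] poly_fun_higher_degree
      by (simp add: m_def)
  qed
  then have "poly_fun m (\<Sum>a\<le>m. if a = m then real N ^ k / real N ^ m * lead_coeff q else 0)
      (\<lambda>c. \<Sum>a\<le>m. shift_sum k N (\<lambda>y. real y ^ a * h a (y mod N)) c)"
    by (intro poly_fun_sum) auto
  then show ?thesis
    unfolding expand shift_sum_sum m_def[symmetric] by simp
qed

section \<open>Eigenvectors of the Holte matrix\<close>

lemma div_less_of_digit_tuples:
  assumes "d \<in> digit_tuples k N" "c < k"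
  shows "(c + (\<Sum>i<k. d i)) div N < k"
proof (cases "N = 0")
  case False
  have "(\<Sum>i<k. d i) \<le> (\<Sum>i<k. N - 1)"
    using assms(1) by (intro sum_mono) (force simp: digit_tuples_def PiE_iff)
  then have "c + (\<Sum>i<k. d i) < k * N"
    using assms(2) False by (cases N) (auto simp: algebra_simps)
  then show ?thesis
    by (simp add: less_mult_imp_div_less)
qed (use assms in simp)

lemma shift_sum_cong_div:
  assumes "c < k" "\<And>x. x < k \<Longrightarrow> f x = g x"
  shows "shift_sum k N (\<lambda>y. f (y div N)) c = shift_sum k N (\<lambda>y. g (y div N)) c"
  unfolding shift_sum_def using assms div_less_of_digit_tuples by (intro sum.cong) auto

lemma holte_T_sum:
  assumes "c < k"
  shows "(\<Sum>c'<k. holte_T k N c c' * f c') = shift_sum k N (\<lambda>y. f (y div N)) c / real N ^ k"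
proof -
  let ?carry = "\<lambda>d. (c + (\<Sum>i<k. d i)) div N"
  have "(\<Sum>c'<k. real (holte_H k N c c') * f c') =
      (\<Sum>c'<k. \<Sum>d\<in>{d \<in> digit_tuples k N. ?carry d = c'}. f (?carry d))"
    unfolding holte_H_def digit_tuples_def by (simp add: add.commute)
  also have "\<dots> = (\<Sum>d\<in>digit_tuples k N. f (?carry d))"
    using div_less_of_digit_tuples[OF _ assms] by (intro sum.group) auto
  finally show ?thesis
    unfolding holte_T_def shift_sum_def by (simp add: sum_divide_distrib[symmetric])
qed

definition holte_eigenpoly :: "nat \<Rightarrow> nat \<Rightarrow> nat \<Rightarrow> real poly \<Rightarrow> bool" where
  "holte_eigenpoly k N j q \<longleftrightarrow>
     (\<forall>c<k. shift_sum k N (\<lambda>y. poly q (real (y div N))) c = real N ^ k / real N ^ j * poly q (real c))"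

lemma holte_eigenpoly_diff:
  "holte_eigenpoly k N j p \<Longrightarrow> holte_eigenpoly k N j q \<Longrightarrow> holte_eigenpoly k N j (p - q)"
  unfolding holte_eigenpoly_def by (simp add: shift_sum_diff right_diff_distrib)

lemma holte_eigenpoly_smult: "holte_eigenpoly k N j p \<Longrightarrow> holte_eigenpoly k N j (smult a p)"
  unfolding holte_eigenpoly_def by (simp add: shift_sum_cmult)

lemma holte_eigenpoly_degree:
  assumes "N \<ge> 2" "degree q < k" "q \<noteq> 0" "holte_eigenpoly k N j q"
  shows "degree q = j"
proof -
  let ?m = "degree q"
  obtain p where p: "degree p \<le> ?m" "coeff p ?m = real N ^ k / real N ^ ?m * lead_coeff q"
      "\<And>c. shift_sum k N (\<lambda>y. poly q (real (y div N))) c = poly p (real c)"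
    using poly_fun_shift_sum_poly_div[of N q k] assms(1,2) unfolding poly_fun_def by auto
  have "p = smult (real N ^ k / real N ^ j) q"
  proof (rule poly_eqI_degree[of "real ` {..<k}"])
    show "poly p x = poly (smult (real N ^ k / real N ^ j) q) x" if "x \<in> real ` {..<k}" for x
      using that assms(4) p(3) unfolding holte_eigenpoly_def by auto
    show "degree p < card (real ` {..<k})" "degree (smult (real N ^ k / real N ^ j) q) < card (real ` {..<k})"
      using p(1) assms(2) by (simp_all add: card_image)
  qed
  then have "real N ^ k / real N ^ ?m * lead_coeff q = real N ^ k / real N ^ j * lead_coeff q"
    using p(2) by (metis coeff_smult)
  then have "real N ^ j = real N ^ ?m"
    using assms(1,3) by (simp add: field_simps)
  then show ?thesis
    using assms(1) by (simp add: power_inject_exp)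
qed

lemma holte_eigenpoly_unique:
  assumes "N \<ge> 2" "degree P < k" "degree q < k" "poly P 0 \<noteq> 0"
    and "holte_eigenpoly k N j P" "holte_eigenpoly k N j q"
  shows "q = smult (poly q 0 / poly P 0) P"
proof -
  have "P \<noteq> 0"
    using assms(4) by auto
  then have deg_P: "degree P = j"
    using assms holte_eigenpoly_degree by blast
  define \<alpha> where "\<alpha> = lead_coeff q / lead_coeff P"
  define r where "r = q - smult \<alpha> P"
  have "coeff r j = 0"
  proof (cases "q = 0")
    case False
    then have "degree q = j"
      using assms holte_eigenpoly_degree by blast
    moreover have "lead_coeff P \<noteq> 0"
      using \<open>P \<noteq> 0\<close> by simp
    ultimately show ?thesis
      using deg_P by (simp add: r_def \<alpha>_def)
  qed (simp add: r_def \<alpha>_def)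
  have "r = 0"
  proof (rule ccontr)
    assume "r \<noteq> 0"
    have "degree r < k"
      unfolding r_def using assms(2,3) by (intro degree_diff_less le_less_trans[OF degree_smult_le])
    moreover have "holte_eigenpoly k N j r"
      unfolding r_def using assms(5,6) by (intro holte_eigenpoly_diff holte_eigenpoly_smult)
    ultimately have "degree r = j"
      using assms(1) \<open>r \<noteq> 0\<close> holte_eigenpoly_degree by blast
    with \<open>coeff r j = 0\<close> \<open>r \<noteq> 0\<close> show False
      by (metis leading_coeff_0_iff)
  qed
  then have "q = smult \<alpha> P"
    by (simp add: r_def)
  moreover from this have "\<alpha> = poly q 0 / poly P 0"
    using assms(4) by simp
  ultimately show ?thesis
    by simp
qed

lemma exists_poly_interpolating:
  fixes f :: "nat \<Rightarrow> real"
  shows "\<exists>q. degree q \<le> n \<and> (\<forall>i\<le>n. poly q (real i) = f i)"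
proof (induction n)
  case 0
  show ?case
    by (intro exI[of _ "[:f 0:]"]) simp
next
  case (Suc n)
  then obtain q where q: "degree q \<le> n" "\<And>i. i \<le> n \<Longrightarrow> poly q (real i) = f i"
    by blast
  define w where "w = (\<Prod>i\<le>n. [:- real i, 1:])"
  have deg_w: "degree w \<le> Suc n"
    unfolding w_def using degree_prod_sum_le[of "{..n}" "\<lambda>i. [:- real i, 1:]"] by simp
  have poly_w: "poly w x = (\<Prod>i\<le>n. x - real i)" for x
    unfolding w_def poly_prod by simp
  define \<alpha> where "\<alpha> = (f (Suc n) - poly q (real (Suc n))) / poly w (real (Suc n))"
  have "poly w (real (Suc n)) \<noteq> 0"
    unfolding poly_w by (auto simp: prod_zero_iff)
  moreover have "poly w (real i) = 0" if "i \<le> n" for i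
    unfolding poly_w using that by (force simp: prod_zero_iff)
  ultimately have "poly (q + smult \<alpha> w) (real i) = f i" if "i \<le> Suc n" for i
    using that q(2) by (cases "i = Suc n") (auto simp: \<alpha>_def)
  moreover have "degree (q + smult \<alpha> w) \<le> Suc n"
    using q(1) deg_w by (intro degree_add_le order_trans[OF degree_smult_le]) auto
  ultimately show ?case
    by blast
qed

lemma is_holte_eigvec_iff:
  assumes "N > 0"
  shows "is_holte_eigvec k N j v \<longleftrightarrow>
    (\<forall>c<k. shift_sum k N (\<lambda>y. v (y div N)) c = real N ^ k / real N ^ j * v c) \<and>
    v 0 = 1 \<and> (\<forall>i\<ge>k. v i = 0)"
  unfolding is_holte_eigvec_def using holte_T_sum assms by (auto simp: field_simps)

lemma is_holte_eigvec_eigenpoly: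
  assumes "N > 0" "degree P < k" "poly P 0 \<noteq> 0" "holte_eigenpoly k N j P"
  shows "is_holte_eigvec k N j (\<lambda>i. if i < k then poly P (real i) / poly P 0 else 0)"
    (is "is_holte_eigvec k N j ?v")
  unfolding is_holte_eigvec_iff[OF assms(1)]
proof (intro conjI allI impI)
  fix c
  assume "c < k"
  then have "shift_sum k N (\<lambda>y. ?v (y div N)) c =
      shift_sum k N (\<lambda>y. inverse (poly P 0) * poly P (real (y div N))) c"
    by (intro shift_sum_cong_div) (auto simp: field_simps)
  also have "\<dots> = real N ^ k / real N ^ j * ?v c"
    using assms(4) \<open>c < k\<close> unfolding shift_sum_cmult holte_eigenpoly_def
    by (simp add: field_simps)
  finally show "shift_sum k N (\<lambda>y. ?v (y div N)) c = real N ^ k / real N ^ j * ?v c" .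
qed (use assms(2,3) in auto)

lemma holte_eigvec_eq_eigenpoly:
  assumes "N \<ge> 2" "degree P < k" "poly P 0 \<noteq> 0" "holte_eigenpoly k N j P"
    and "is_holte_eigvec k N j v"
  shows "v = (\<lambda>i. if i < k then poly P (real i) / poly P 0 else 0)"
proof -
  have "N > 0" "k > 0"
    using assms(1,2) by auto
  obtain q where q: "degree q \<le> k - 1" "\<And>i. i \<le> k - 1 \<Longrightarrow> poly q (real i) = v i"
    using exists_poly_interpolating by blast
  then have q_v: "poly q (real i) = v i" if "i < k" for i
    using that by simp
  have "holte_eigenpoly k N j q"
    unfolding holte_eigenpoly_def
  proof (intro allI impI)
    fix c
    assume "c < k"
    then have "shift_sum k N (\<lambda>y. poly q (real (y div N))) c = shift_sum k N (\<lambda>y. v (y div N)) c"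
      by (intro shift_sum_cong_div) (simp_all add: q_v)
    then show "shift_sum k N (\<lambda>y. poly q (real (y div N))) c = real N ^ k / real N ^ j * poly q (real c)"
      using assms(5) \<open>N > 0\<close> \<open>c < k\<close> q_v by (simp add: is_holte_eigvec_iff)
  qed
  then have "q = smult (poly q 0 / poly P 0) P"
    using assms(1-4) q(1) \<open>k > 0\<close> by (intro holte_eigenpoly_unique) auto
  moreover have "poly q 0 = 1"
    using q_v[of 0] assms(5) \<open>k > 0\<close> by (simp add: is_holte_eigvec_def)
  ultimately show ?thesis
    using assms(5) q_v by (auto simp: fun_eq_iff is_holte_eigvec_def)
qed

lemma holte_v_eq:
  assumes "N \<ge> 2" "degree P < k" "poly P 0 \<noteq> 0" "holte_eigenpoly k N j P"
  shows "holte_v k N j = (\<lambda>i. if i < k then poly P (real i) / poly P 0 else 0)"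
  unfolding holte_v_def
proof (rule the_equality)
  show "is_holte_eigvec k N j (\<lambda>i. if i < k then poly P (real i) / poly P 0 else 0)"
    using assms by (intro is_holte_eigvec_eigenpoly) auto
qed (use assms holte_eigvec_eq_eigenpoly in blast)

section \<open>The quotient polynomials in the binomial basis\<close>

lemma coeff_one_plus_X_power: "coeff ([:1, 1:] ^ m :: real poly) i = real (m choose i)"
proof (cases "i \<le> m")
  case False
  then have "degree ([:1, 1:] ^ m :: real poly) < i"
    by (simp add: degree_linear_power)
  with False show ?thesis
    by (simp add: coeff_eq_0 binomial_eq_0)
qed (simp add: coeff_linear_poly_power)

lemma binomial_sum_choose:
  "(\<Sum>i\<le>n. monom (a * real (n choose i) * real (i choose r)) i) =
     smult (a * real (n choose r)) (monom 1 r * [:1, 1:] ^ (n - r))"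
proof (rule poly_eqI)
  fix i
  have lhs: "coeff (\<Sum>i\<le>n. monom (a * real (n choose i) * real (i choose r)) i) i =
      (if i \<le> n then a * real (n choose i) * real (i choose r) else 0)"
    by (simp add: coeff_sum)
  have rhs: "coeff (smult (a * real (n choose r)) (monom 1 r * [:1, 1:] ^ (n - r))) i =
      (if i < r then 0 else a * real (n choose r) * real (n - r choose (i - r)))"
    by (simp add: coeff_monom_mult coeff_one_plus_X_power)
  consider "i < r" | "r \<le> i" "i \<le> n" | "n < i"
    by linarith
  then show "coeff (\<Sum>i\<le>n. monom (a * real (n choose i) * real (i choose r)) i) i =
      coeff (smult (a * real (n choose r)) (monom 1 r * [:1, 1:] ^ (n - r))) i"
  proof cases
    case 1
    then show ?thesis
      unfolding lhs rhs by (simp add: binomial_eq_0)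
  next
    case 2
    then show ?thesis
      unfolding lhs rhs using choose_mult[OF 2]
      by (simp add: mult.assoc flip: of_nat_mult)
  next
    case 3
    then have "n choose r = 0 \<or> n - r choose (i - r) = 0"
      by (cases "r \<le> n") (simp_all add: binomial_eq_0)
    with 3 show ?thesis
      unfolding lhs rhs by auto
  qed
qed

lemma binomial_sum_binomial_basis:
  assumes "j \<le> n"
  shows "(\<Sum>i\<le>n. monom (real (n choose i) * (\<Sum>r\<le>j. b r * real (i choose r))) i) =
    [:1, 1:] ^ (n - j) * (\<Sum>r\<le>j. smult (b r * real (n choose r)) (monom 1 r * [:1, 1:] ^ (j - r)))"
proof -
  have "(\<Sum>i\<le>n. monom (real (n choose i) * (\<Sum>r\<le>j. b r * real (i choose r))) i) =
      (\<Sum>r\<le>j. \<Sum>i\<le>n. monom (b r * real (n choose i) * real (i choose r)) i)"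
    by (simp add: sum_distrib_left monom_sum ac_simps sum.swap[of _ "{..n}"])
  also have "\<dots> = (\<Sum>r\<le>j. [:1, 1:] ^ (n - j) * smult (b r * real (n choose r)) (monom 1 r * [:1, 1:] ^ (j - r)))"
  proof (intro sum.cong refl)
    fix r
    assume "r \<in> {..j}"
    then have "n - r = (n - j) + (j - r)"
      using assms by simp
    then show "(\<Sum>i\<le>n. monom (b r * real (n choose i) * real (i choose r)) i) =
        [:1, 1:] ^ (n - j) * smult (b r * real (n choose r)) (monom 1 r * [:1, 1:] ^ (j - r))"
      unfolding binomial_sum_choose by (simp add: power_add ac_simps)
  qed
  finally show ?thesis
    by (simp add: sum_distrib_left)
qed

lemma holte_Q_eq_binomial_basis:
  assumes "N \<ge> 2" "j < k" "degree P < k" "poly P 0 \<noteq> 0" "holte_eigenpoly k N j P"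
    and "\<And>i. i < k \<Longrightarrow> poly P (real i) = (\<Sum>r\<le>j. b r * real (i choose r))"
  shows "holte_Q k N j =
    (\<Sum>r\<le>j. smult (b r / poly P 0 * real (k - 1 choose r)) (monom 1 r * [:1, 1:] ^ (j - r)))"
    (is "_ = ?R")
proof -
  have v: "holte_v k N j i = (\<Sum>r\<le>j. b r / poly P 0 * real (i choose r))" if "i < k" for i
    using that by (simp add: holte_v_eq[OF assms(1,3-5)] assms(6) sum_divide_distrib)
  have "{..<k} = {..k - 1}"
    using assms(2) by auto
  then have "(\<Sum>i<k. monom (real (k - 1 choose i) * holte_v k N j i) i) =
      (\<Sum>i\<le>k - 1. monom (real (k - 1 choose i) * (\<Sum>r\<le>j. b r / poly P 0 * real (i choose r))) i)"
    using v by (intro sum.cong) auto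
  also have "\<dots> = [:1, 1:] ^ (k - 1 - j) *
      (\<Sum>r\<le>j. smult (b r / poly P 0 * real (k - 1 choose r)) (monom 1 r * [:1, 1:] ^ (j - r)))"
    using assms(2) by (intro binomial_sum_binomial_basis) simp
  finally have "(\<Sum>i<k. monom (real (k - 1 choose i) * holte_v k N j i) i) =
      [:1, 1:] ^ (k - 1 - j) * ?R" .
  then show ?thesis
    unfolding holte_Q_def by (simp del: pCons_one add: nonzero_mult_div_cancel_left)
qed

section \<open>Moments\<close>

lemma sum_lessThan_id: "(\<Sum>t<N. real t) = real N * (real N - 1) / 2"
  by (induction N) (simp_all add: field_simps)

lemma sum_lessThan_power2: "(\<Sum>t<N. real t ^ 2) = real N * (real N - 1) * (2 * real N - 1) / 6"
  by (induction N) (simp_all add: field_simps power2_eq_square)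

lemma sum_lessThan_power3: "(\<Sum>t<N. real t ^ 3) = (real N * (real N - 1) / 2) ^ 2"
  by (induction N) (simp_all add: field_simps power2_eq_square power3_eq_cube)

lemma sum_lessThan_plus_id: "(\<Sum>t<N. X + real t) = real N * X + real N * (real N - 1) / 2"
  by (induction N) (simp_all add: field_simps)

lemma sum_lessThan_plus_power2:
  "(\<Sum>t<N. (X + real t) ^ 2) =
     real N * X ^ 2 + X * real N * (real N - 1) + real N * (real N - 1) * (2 * real N - 1) / 6"
  by (induction N) (simp_all add: field_simps power2_eq_square)

lemma sum_lessThan_plus_power3:
  "(\<Sum>t<N. (X + real t) ^ 3) = real N * X ^ 3 + 3 * X ^ 2 * (real N * (real N - 1) / 2)
     + 3 * X * (real N * (real N - 1) * (2 * real N - 1) / 6) + (real N * (real N - 1) / 2) ^ 2"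
  by (induction N) (simp_all add: field_simps power2_eq_square power3_eq_cube)

lemma shift_sum_id:
  "shift_sum k N (\<lambda>y. real y) c = real N ^ k * (real c + real k * (real N - 1) / 2)"
proof (induction k arbitrary: c)
  case (Suc k)
  let ?X = "real c + real k * (real N - 1) / 2"
  have "shift_sum (Suc k) N (\<lambda>y. real y) c = real N ^ k * (\<Sum>t<N. ?X + real t)"
    unfolding shift_sum_Suc Suc by (simp add: sum_distrib_left ac_simps)
  also have "\<dots> = real N ^ Suc k * (real c + real (Suc k) * (real N - 1) / 2)"
    unfolding sum_lessThan_plus_id by (simp add: field_simps)
  finally show ?case .
qed simp

lemma shift_sum_power2:
  "shift_sum k N (\<lambda>y. real y ^ 2) c =
     real N ^ k * ((real c + real k * (real N - 1) / 2) ^ 2 + real k * (real N ^ 2 - 1) / 12)"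
proof (induction k arbitrary: c)
  case (Suc k)
  let ?X = "real c + real k * (real N - 1) / 2" and ?V = "real k * (real N ^ 2 - 1) / 12"
  have "shift_sum (Suc k) N (\<lambda>y. real y ^ 2) c = real N ^ k * ((\<Sum>t<N. (?X + real t) ^ 2) + real N * ?V)"
    unfolding shift_sum_Suc Suc by (simp add: sum_distrib_left[symmetric] sum.distrib ac_simps)
  also have "\<dots> = real N ^ Suc k *
      ((real c + real (Suc k) * (real N - 1) / 2) ^ 2 + real (Suc k) * (real N ^ 2 - 1) / 12)"
    unfolding sum_lessThan_plus_power2 by (simp add: field_simps power2_eq_square)
  finally show ?case .
qed simp

lemma shift_sum_power3:
  "shift_sum k N (\<lambda>y. real y ^ 3) c = real N ^ k * ((real c + real k * (real N - 1) / 2) ^ 3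
     + (real c + real k * (real N - 1) / 2) * real k * (real N ^ 2 - 1) / 4)"
proof (induction k arbitrary: c)
  case (Suc k)
  let ?X = "real c + real k * (real N - 1) / 2" and ?V = "real k * (real N ^ 2 - 1) / 4"
  have "shift_sum (Suc k) N (\<lambda>y. real y ^ 3) c = (\<Sum>t<N. real N ^ k * ((?X + real t) ^ 3 + (?X + real t) * ?V))"
    unfolding shift_sum_Suc Suc by (simp add: ac_simps)
  also have "\<dots> = real N ^ k * ((\<Sum>t<N. (?X + real t) ^ 3) + (\<Sum>t<N. ?X + real t) * ?V)"
    unfolding sum_distrib_left[symmetric] by (subst sum.distrib) (simp only: sum_distrib_right)
  also have "\<dots> = real N ^ Suc k * ((real c + real (Suc k) * (real N - 1) / 2) ^ 3
      + (real c + real (Suc k) * (real N - 1) / 2) * real (Suc k) * (real N ^ 2 - 1) / 4)"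
    unfolding sum_lessThan_plus_power3 sum_lessThan_plus_id by (simp add: field_simps power2_eq_square power3_eq_cube)
  finally show ?case .
qed simp

lemma div_add_less_eq:
  assumes "N > 0" "t < N"
  shows "(z + t) div N = (if t < N - z mod N then z div N else Suc (z div N))"
proof -
  have split: "(z + t) div N = z div N + (z mod N + t) div N"
    using div_add1_eq[of z t N] assms(2) by simp
  have "z mod N < N"
    using assms(1) by simp
  show ?thesis
  proof (cases "t < N - z mod N")
    case True
    then show ?thesis
      using split by simp
  next
    case False
    then have "(z mod N + t) div N = Suc ((z mod N + t - N) div N)"
      using le_div_geq[OF assms(1)] by simp
    also have "(z mod N + t - N) div N = 0"
      using \<open>z mod N < N\<close> assms(2) by (intro div_less) linarith
    finally show ?thesis
      using split False by simp
  qed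
qed

lemma sum_shift_div:
  fixes f :: "nat \<Rightarrow> real"
  assumes "N > 0"
  shows "(\<Sum>t<N. f ((z + t) div N)) = real (N - z mod N) * f (z div N) + real (z mod N) * f (Suc (z div N))"
proof -
  have "(\<Sum>t<N. f ((z + t) div N)) = (\<Sum>t<N. if t < N - z mod N then f (z div N) else f (Suc (z div N)))"
    using assms by (intro sum.cong) (simp_all add: div_add_less_eq)
  also have "\<dots> = (\<Sum>t\<in>{..<N} \<inter> {t. t < N - z mod N}. f (z div N)) +
      (\<Sum>t\<in>{..<N} \<inter> - {t. t < N - z mod N}. f (Suc (z div N)))"
    by (rule sum.If_cases) simp
  also have "{..<N} \<inter> {t. t < N - z mod N} = {..<N - z mod N}"
    by auto
  also have "{..<N} \<inter> - {t. t < N - z mod N} = {N - z mod N..<N}"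
    by auto
  finally show ?thesis
    using assms by simp
qed

lemma real_div_mod_eq: "real z = real N * real (z div N) + real (z mod N)"
  by (metis div_mult_mod_eq mult.commute of_nat_add of_nat_mult)

lemma sum_shift_div_id: "N > 0 \<Longrightarrow> (\<Sum>t<N. real ((z + t) div N)) = real z"
  using sum_shift_div[of N "\<lambda>x. real x" z] real_div_mod_eq[of z N] by (simp add: of_nat_diff algebra_simps)

lemma sum_shift_div_power2:
  "N > 0 \<Longrightarrow> (\<Sum>t<N. real ((z + t) div N) ^ 2) =
     (real z ^ 2 + real (z mod N) * (real N - real (z mod N))) / real N"
  using sum_shift_div[of N "\<lambda>x. real x ^ 2" z] real_div_mod_eq[of z N]
  by (simp add: of_nat_diff field_simps power2_eq_square)

lemma sum_shift_div_power3:
  "N > 0 \<Longrightarrow> (\<Sum>t<N. real ((z + t) div N) ^ 3) =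
     (real z ^ 3 + 3 * real z * (real (z mod N) * (real N - real (z mod N)))
      + real (z mod N) * (real N - real (z mod N)) * (real N - 2 * real (z mod N))) / real N ^ 2"
  using sum_shift_div[of N "\<lambda>x. real x ^ 3" z] real_div_mod_eq[of z N]
  by (simp add: of_nat_diff field_simps power2_eq_square power3_eq_cube)

lemma sum_residue_product: "(\<Sum>r<N. real r * (real N - real r)) = real N * (real N ^ 2 - 1) / 6"
proof -
  have "(\<Sum>r<N. real r * (real N - real r)) = real N * (\<Sum>r<N. real r) - (\<Sum>r<N. real r ^ 2)"
    by (simp add: algebra_simps power2_eq_square sum_distrib_left sum_subtractf)
  then show ?thesis
    unfolding sum_lessThan_id sum_lessThan_power2 by (simp add: field_simps power2_eq_square)
qed

lemma sum_residue_cubic: "(\<Sum>r<N. real r * (real N - real r) * (real N - 2 * real r)) = 0"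
proof -
  have "(\<Sum>r<N. real r * (real N - real r) * (real N - 2 * real r)) =
      real N ^ 2 * (\<Sum>r<N. real r) - 3 * real N * (\<Sum>r<N. real r ^ 2) + 2 * (\<Sum>r<N. real r ^ 3)"
    by (simp add: algebra_simps power2_eq_square power3_eq_cube sum_distrib_left sum_subtractf sum.distrib)
  then show ?thesis
    unfolding sum_lessThan_id sum_lessThan_power2 sum_lessThan_power3 by (simp add: field_simps power2_eq_square)
qed

lemma shift_sum_id_periodic:
  assumes "N > 0"
  shows "shift_sum (Suc (Suc n)) N (\<lambda>z. real z * h (z mod N)) c =
    real N ^ Suc n * (\<Sum>u<N. h u) * (real c + real (Suc (Suc n)) * (real N - 1) / 2)"
proof -
  define \<sigma> where "\<sigma> r = (\<Sum>t<N. real t * h ((r + t) mod N))" for r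
  have "(\<Sum>t<N. real (w + t) * h ((w + t) mod N)) = (\<Sum>u<N. h u) * real w + \<sigma> (w mod N)" for w
  proof -
    have "(\<Sum>t<N. real (w + t) * h ((w + t) mod N)) =
        real w * (\<Sum>t<N. h ((w + t) mod N)) + (\<Sum>t<N. real t * h ((w + t) mod N))"
      by (simp add: algebra_simps sum.distrib sum_distrib_left)
    then show ?thesis
      unfolding \<sigma>_def sum_mod_shift[OF assms] by (simp add: mod_add_left_eq)
  qed
  then have "shift_sum (Suc (Suc n)) N (\<lambda>z. real z * h (z mod N)) c =
      (\<Sum>u<N. h u) * shift_sum (Suc n) N (\<lambda>w. real w) c + shift_sum (Suc n) N (\<lambda>w. \<sigma> (w mod N)) c"
    unfolding shift_sum_Suc'[of "Suc n"] by (simp add: shift_sum_add shift_sum_cmult)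
  also have "shift_sum (Suc n) N (\<lambda>w. \<sigma> (w mod N)) c = real N ^ n * (\<Sum>r<N. \<sigma> r)"
    by (rule shift_sum_periodic[OF assms])
  also have "(\<Sum>r<N. \<sigma> r) = (\<Sum>t<N. real t) * (\<Sum>u<N. h u)"
    unfolding \<sigma>_def sum_distrib_right
    by (subst sum.swap) (simp add: sum_distrib_left[symmetric] add.commute sum_mod_shift[OF assms])
  finally show ?thesis
    unfolding shift_sum_id sum_lessThan_id by (simp add: field_simps)
qed

lemma shift_sum_div_id:
  assumes "N > 0" "1 \<le> k"
  shows "real N * shift_sum k N (\<lambda>y. real (y div N)) c =
    real N ^ k * (real c + (real k - 1) * (real N - 1) / 2)"
proof -
  obtain n where k: "k = Suc n"
    using assms(2) by (cases k) auto
  have "shift_sum k N (\<lambda>y. real (y div N)) c = shift_sum n N (\<lambda>z. real z) c"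
    unfolding k shift_sum_Suc' using assms(1) by (simp add: sum_shift_div_id)
  also have "\<dots> = real N ^ n * (real c + real n * (real N - 1) / 2)"
    by (rule shift_sum_id)
  finally have sum_eq: "shift_sum k N (\<lambda>y. real (y div N)) c = real N ^ n * (real c + real n * (real N - 1) / 2)" .
  show ?thesis
    unfolding sum_eq by (simp add: k field_simps)
qed

lemma shift_sum_div_power2:
  assumes "N > 0" "2 \<le> k"
  shows "real N ^ 2 * shift_sum k N (\<lambda>y. real (y div N) ^ 2) c =
    real N ^ k * ((real c + (real k - 1) * (real N - 1) / 2) ^ 2 + (real k + 1) * (real N ^ 2 - 1) / 12)"
proof -
  obtain n where k: "k = Suc (Suc n)"
    using assms(2) by (intro that[of "k - 2"]) simp
  let ?\<pi> = "\<lambda>r. real r * (real N - real r)"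
  have "shift_sum k N (\<lambda>y. real (y div N) ^ 2) c =
      shift_sum (Suc n) N (\<lambda>z. (real z ^ 2 + ?\<pi> (z mod N)) / real N) c"
    unfolding k shift_sum_Suc'[of "Suc n"] using assms(1) by (simp add: sum_shift_div_power2)
  also have "\<dots> = (shift_sum (Suc n) N (\<lambda>z. real z ^ 2) c + shift_sum (Suc n) N (\<lambda>z. ?\<pi> (z mod N)) c) / real N"
    by (simp add: shift_sum_divide shift_sum_add)
  also have "shift_sum (Suc n) N (\<lambda>z. ?\<pi> (z mod N)) c = real N ^ n * (real N * (real N ^ 2 - 1) / 6)"
    using shift_sum_periodic[OF assms(1), of n ?\<pi> c] sum_residue_product[of N] by simp
  finally have sum_eq: "shift_sum k N (\<lambda>y. real (y div N) ^ 2) c =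
    (shift_sum (Suc n) N (\<lambda>z. real z ^ 2) c + real N ^ n * (real N * (real N ^ 2 - 1) / 6)) / real N" .
  show ?thesis
    unfolding sum_eq unfolding shift_sum_power2 k using assms(1) by (simp add: field_simps power2_eq_square)
qed

lemma shift_sum_div_power3:
  assumes "N > 0" "3 \<le> k"
  shows "real N ^ 3 * shift_sum k N (\<lambda>y. real (y div N) ^ 3) c =
    real N ^ k * ((real c + (real k - 1) * (real N - 1) / 2) ^ 3
      + (real k + 1) * (real N ^ 2 - 1) / 4 * (real c + (real k - 1) * (real N - 1) / 2))"
proof -
  obtain n where k: "k = Suc (Suc (Suc n))"
    using assms(2) by (intro that[of "k - 3"]) simp
  let ?\<pi> = "\<lambda>r. real r * (real N - real r)"
  let ?\<kappa> = "\<lambda>r. real r * (real N - real r) * (real N - 2 * real r)"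
  have "shift_sum k N (\<lambda>y. real (y div N) ^ 3) c =
      shift_sum (Suc (Suc n)) N (\<lambda>z. (real z ^ 3 + 3 * (real z * ?\<pi> (z mod N)) + ?\<kappa> (z mod N)) / real N ^ 2) c"
    unfolding k shift_sum_Suc'[of "Suc (Suc n)"] using assms(1) by (simp add: sum_shift_div_power3 mult.assoc)
  also have "\<dots> = (shift_sum (Suc (Suc n)) N (\<lambda>z. real z ^ 3) c
      + 3 * shift_sum (Suc (Suc n)) N (\<lambda>z. real z * ?\<pi> (z mod N)) c
      + shift_sum (Suc (Suc n)) N (\<lambda>z. ?\<kappa> (z mod N)) c) / real N ^ 2"
    by (simp add: shift_sum_divide shift_sum_add shift_sum_cmult)
  also have "shift_sum (Suc (Suc n)) N (\<lambda>z. ?\<kappa> (z mod N)) c = 0"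
    using shift_sum_periodic[OF assms(1), of "Suc n" ?\<kappa> c] sum_residue_cubic[of N] by simp
  finally have sum_eq: "shift_sum k N (\<lambda>y. real (y div N) ^ 3) c =
    (shift_sum (Suc (Suc n)) N (\<lambda>z. real z ^ 3) c
      + 3 * shift_sum (Suc (Suc n)) N (\<lambda>z. real z * ?\<pi> (z mod N)) c + 0) / real N ^ 2" .
  show ?thesis
    unfolding sum_eq
    unfolding shift_sum_power3 shift_sum_id_periodic[OF assms(1), of n ?\<pi>] sum_residue_product k
    using assms(1) by (simp add: field_simps power2_eq_square power3_eq_cube)
qed

section \<open>The eigenpolynomials of degree 2 and 3\<close>

lemma real_choose_two: "real (i choose 2) = real i * (real i - 1) / 2"
  using gbinomial_mult_fact[of 2 "real i"] by (simp add: binomial_gbinomial numeral_2_eq_2)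

lemma real_choose_three: "real (i choose 3) = real i * (real i - 1) * (real i - 2) / 6"
  using gbinomial_mult_fact[of 3 "real i"] by (simp add: binomial_gbinomial numeral_3_eq_3 field_simps)

(* In y = x - (k-1)/2: holte_p2 k = y^2 - (k+1)/12 and holte_p3 k = y^3 - (k+1) y / 4. *)
definition holte_p2 :: "nat \<Rightarrow> real poly" where
  "holte_p2 k = [:(3 * real k - 1) * (real k - 2) / 12, - (real k - 1), 1:]"

definition holte_p3 :: "nat \<Rightarrow> real poly" where
  "holte_p3 k = [:- real k * (real k - 1) * (real k - 3) / 8, (3 * real k - 1) * (real k - 2) / 4,
     - 3 * (real k - 1) / 2, 1:]"

lemma holte_eigenpoly_holte_p2:
  assumes "N > 0" "2 \<le> k"
  shows "holte_eigenpoly k N 2 (holte_p2 k)"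
  unfolding holte_eigenpoly_def
proof (intro allI impI)
  fix c
  let ?X = "real c + (real k - 1) * (real N - 1) / 2"
  have S1: "shift_sum k N (\<lambda>y. real (y div N)) c = real N ^ k / real N * ?X"
    using shift_sum_div_id[of N k c] assms by (simp add: field_simps)
  have S2: "shift_sum k N (\<lambda>y. real (y div N) ^ 2) c =
      real N ^ k / real N ^ 2 * (?X ^ 2 + (real k + 1) * (real N ^ 2 - 1) / 12)"
    using shift_sum_div_power2[OF assms, of c] assms by (simp add: field_simps)
  have "poly (holte_p2 k) x = x ^ 2 - (real k - 1) * x + (3 * real k - 1) * (real k - 2) / 12" for x
    by (simp add: holte_p2_def algebra_simps power2_eq_square)
  then have "shift_sum k N (\<lambda>y. poly (holte_p2 k) (real (y div N))) c =
      shift_sum k N (\<lambda>y. real (y div N) ^ 2) c - (real k - 1) * shift_sum k N (\<lambda>y. real (y div N)) c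
      + real N ^ k * ((3 * real k - 1) * (real k - 2) / 12)"
    by (simp add: shift_sum_add shift_sum_diff shift_sum_cmult shift_sum_const)
  also have "\<dots> = real N ^ k / real N ^ 2 * poly (holte_p2 k) (real c)"
    unfolding S1 S2 using assms by (simp add: holte_p2_def field_simps power2_eq_square)
  finally show "shift_sum k N (\<lambda>y. poly (holte_p2 k) (real (y div N))) c =
      real N ^ k / real N ^ 2 * poly (holte_p2 k) (real c)" .
qed

lemma holte_eigenpoly_holte_p3:
  assumes "N > 0" "3 \<le> k"
  shows "holte_eigenpoly k N 3 (holte_p3 k)"
  unfolding holte_eigenpoly_def
proof (intro allI impI)
  fix c
  let ?X = "real c + (real k - 1) * (real N - 1) / 2"
  have S1: "shift_sum k N (\<lambda>y. real (y div N)) c = real N ^ k / real N * ?X"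
    using shift_sum_div_id[of N k c] assms by (simp add: field_simps)
  have S2: "shift_sum k N (\<lambda>y. real (y div N) ^ 2) c =
      real N ^ k / real N ^ 2 * (?X ^ 2 + (real k + 1) * (real N ^ 2 - 1) / 12)"
    using shift_sum_div_power2[of N k c] assms by (simp add: field_simps)
  have S3: "shift_sum k N (\<lambda>y. real (y div N) ^ 3) c =
      real N ^ k / real N ^ 3 * (?X ^ 3 + (real k + 1) * (real N ^ 2 - 1) / 4 * ?X)"
    using shift_sum_div_power3[OF assms, of c] assms by (simp add: field_simps)
  have "poly (holte_p3 k) x = x ^ 3 - 3 * (real k - 1) / 2 * x ^ 2
      + (3 * real k - 1) * (real k - 2) / 4 * x - real k * (real k - 1) * (real k - 3) / 8" for x
    by (simp add: holte_p3_def field_simps power2_eq_square power3_eq_cube)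
  then have "shift_sum k N (\<lambda>y. poly (holte_p3 k) (real (y div N))) c =
      shift_sum k N (\<lambda>y. real (y div N) ^ 3) c
      - 3 * (real k - 1) / 2 * shift_sum k N (\<lambda>y. real (y div N) ^ 2) c
      + (3 * real k - 1) * (real k - 2) / 4 * shift_sum k N (\<lambda>y. real (y div N)) c
      - real N ^ k * (real k * (real k - 1) * (real k - 3) / 8)"
    by (simp add: shift_sum_add shift_sum_diff shift_sum_cmult shift_sum_divide shift_sum_const
        right_diff_distrib)
  also have "\<dots> = real N ^ k / real N ^ 3 * poly (holte_p3 k) (real c)"
    unfolding S1 S2 S3 using assms by (simp add: holte_p3_def field_simps power2_eq_square power3_eq_cube)
  finally show "shift_sum k N (\<lambda>y. poly (holte_p3 k) (real (y div N))) c =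
      real N ^ k / real N ^ 3 * poly (holte_p3 k) (real c)" .
qed

lemma poly_binomial_basis_2:
  fixes a :: "nat \<Rightarrow> real"
  shows "poly (\<Sum>r\<le>2. smult (a r) (monom 1 r * [:1, 1:] ^ (2 - r))) x =
     a 0 * (1 + x) ^ 2 + a 1 * x * (1 + x) + a 2 * x ^ 2"
proof -
  have "{..2::nat} = {0, 1, 2}"
    by auto
  then show ?thesis
    by (simp add: poly_monom field_simps power2_eq_square)
qed

lemma poly_holte_Q_2:
  assumes "N \<ge> 2" "3 \<le> k"
  shows "poly (holte_Q k N 2) x =
    ((3 * real k - 1) * (1 + x ^ 2) - 2 * (3 * real k - 5) * x) / (3 * real k - 1)"
proof -
  define K where "K = real k"
  have K: "K - 2 \<noteq> 0" "3 * K - 1 \<noteq> 0" "real (k - 1) = K - 1"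
    using assms(2) by (auto simp: K_def of_nat_diff)
  let ?P0 = "(3 * K - 1) * (K - 2) / 12"
  let ?b = "\<lambda>r. [?P0, - (K - 2), 2] ! r"
  have p2: "holte_p2 k = [:?P0, - (K - 1), 1:]"
    by (simp add: holte_p2_def K_def)
  have "{..2::nat} = {0, 1, 2}"
    by auto
  then have "poly (holte_p2 k) (real i) = (\<Sum>r\<le>2. ?b r * real (i choose r))" for i
    by (simp add: p2 real_choose_two field_simps power2_eq_square)
  then have "holte_Q k N 2 = (\<Sum>r\<le>2. smult (?b r / ?P0 * real (k - 1 choose r))
      (monom 1 r * [:1, 1:] ^ (2 - r)))"
    using assms K holte_Q_eq_binomial_basis[of N 2 k "holte_p2 k" ?b] holte_eigenpoly_holte_p2[of N k]
    by (simp add: p2)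
  then have "poly (holte_Q k N 2) x = ?b 0 / ?P0 * real (k - 1 choose 0) * (1 + x) ^ 2
      + ?b 1 / ?P0 * real (k - 1 choose 1) * x * (1 + x) + ?b 2 / ?P0 * real (k - 1 choose 2) * x ^ 2"
    by (simp only: poly_binomial_basis_2)
  also have "\<dots> = (1 + x) ^ 2 - 12 * (K - 1) / (3 * K - 1) * x * (1 + x) + 12 * (K - 1) / (3 * K - 1) * x ^ 2"
    using K by (simp add: real_choose_two divide_simps) (simp add: algebra_simps)
  also have "\<dots> = ((3 * K - 1) * (1 + x ^ 2) - 2 * (3 * K - 5) * x) / (3 * K - 1)"
    using K by (simp add: divide_simps) (simp add: algebra_simps power2_eq_square)
  finally show ?thesis
    by (simp add: K_def)
qed

lemma poly_binomial_basis_3: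
  fixes a :: "nat \<Rightarrow> real"
  shows "poly (\<Sum>r\<le>3. smult (a r) (monom 1 r * [:1, 1:] ^ (3 - r))) x =
     a 0 * (1 + x) ^ 3 + a 1 * x * (1 + x) ^ 2 + a 2 * x ^ 2 * (1 + x) + a 3 * x ^ 3"
proof -
  have "{..3::nat} = {0, 1, 2, 3}"
    by auto
  then show ?thesis
    by (simp add: poly_monom field_simps power2_eq_square power3_eq_cube)
qed

lemma poly_holte_Q_3:
  assumes "N \<ge> 2" "4 \<le> k"
  shows "poly (holte_Q k N 3) x = - ((x - 1) * (real k * x ^ 2 - 2 * (real k - 4) * x + real k)) / real k"
proof -
  define K where "K = real k"
  have K: "K \<noteq> 0" "K - 1 \<noteq> 0" "K - 3 \<noteq> 0" "real (k - 1) = K - 1"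
    using assms(2) by (auto simp: K_def of_nat_diff)
  let ?P0 = "- K * (K - 1) * (K - 3) / 8"
  let ?b = "\<lambda>r. [?P0, (3 * K - 4) * (K - 3) / 4, - 3 * (K - 3), 6] ! r"
  have p3: "holte_p3 k = [:?P0, (3 * K - 1) * (K - 2) / 4, - 3 * (K - 1) / 2, 1:]"
    by (simp add: holte_p3_def K_def)
  have "{..3::nat} = {0, 1, 2, 3}"
    by auto
  then have "poly (holte_p3 k) (real i) = (\<Sum>r\<le>3. ?b r * real (i choose r))" for i
    by (simp add: p3 real_choose_two real_choose_three field_simps power2_eq_square power3_eq_cube)
  then have "holte_Q k N 3 = (\<Sum>r\<le>3. smult (?b r / ?P0 * real (k - 1 choose r))
      (monom 1 r * [:1, 1:] ^ (3 - r)))"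
    using assms K holte_Q_eq_binomial_basis[of N 3 k "holte_p3 k" ?b] holte_eigenpoly_holte_p3[of N k]
    by (simp add: p3)
  then have "poly (holte_Q k N 3) x = ?b 0 / ?P0 * real (k - 1 choose 0) * (1 + x) ^ 3
      + ?b 1 / ?P0 * real (k - 1 choose 1) * x * (1 + x) ^ 2
      + ?b 2 / ?P0 * real (k - 1 choose 2) * x ^ 2 * (1 + x)
      + ?b 3 / ?P0 * real (k - 1 choose 3) * x ^ 3"
    by (simp only: poly_binomial_basis_3)
  also have "\<dots> = (1 + x) ^ 3 - 2 * (3 * K - 4) / K * x * (1 + x) ^ 2
      + 12 * (K - 2) / K * x ^ 2 * (1 + x) - 8 * (K - 2) / K * x ^ 3"
    using K by (simp add: real_choose_two real_choose_three divide_simps) (simp add: algebra_simps)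
  also have "\<dots> = - ((x - 1) * (K * x ^ 2 - 2 * (K - 4) * x + K)) / K"
    using K by (simp add: divide_simps) (simp add: algebra_simps power2_eq_square power3_eq_cube)
  finally show ?thesis
    by (simp add: K_def)
qed

theorem mainTheorem7:
  fixes k N :: nat
  shows "(k \<ge> 4 \<and> N \<ge> 2 \<longrightarrow>
           (\<forall>x::real. poly (holte_Q k N 2) x =
              ((3 * real k - 1) * (1 + x ^ 2) - 2 * (3 * real k - 5) * x) / (3 * real k - 1)))
       \<and> (k \<ge> 5 \<and> N \<ge> 2 \<longrightarrow>
           (\<forall>x::real. poly (holte_Q k N 3) x =
              - ((x - 1) * (real k * x ^ 2 - 2 * (real k - 4) * x + real k)) / real k))"
  using poly_holte_Q_2[of N k] poly_holte_Q_3[of N k] by auto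

end
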